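(* Let $\mathcal{A}=\mathcal{R}*_K\mathcal{S}*_L\mathcal{T}\in\mathbb{C}^{I_1\times\cdots\times I_N\times J_1\times\cdots\times J_M}$, where $\mathcal{R}\in\mathbb{C}^{I_1\times\cdots\times I_N\times H_1\times\cdots\times H_K}$, $\mathcal{S}\in\mathbb{C}^{H_1\times\cdots\times H_K\times G_1\times\cdots\times G_L}$ and $\mathcal{T}\in\mathbb{C}^{G_1\times\cdots\times G_L\times J_1\times\cdots\times J_M}$. Then $\mathcal{A}_{\pi\dagger}=\mathcal{A}^{\dagger}$ if and only if $(\mathcal{R}^{\dagger}*_N\mathcal{A}*_M\mathcal{T}^{\dagger})^{\dagger}=\mathcal{T}*_M\mathcal{A}^{\dagger}*_N\mathcal{R}$. In that case $\mathcal{A}_{\pi\dagger}=\mathcal{A}^{\dagger}=\mathcal{B}=\mathcal{C}$, where $\mathcal{B}=\mathcal{T}^{\dagger}*_L(\mathcal{A}*_M\mathcal{T}^{\dagger})^{\dagger}$ and $\mathcal{C}=(\mathcal{R}^{\dagger}*_N\mathcal{A})^{\dagger}*_K\mathcal{R}^{\dagger}$.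
   Context: $\mathbb{C}^{I_1\times\cdots\times I_N}$ denotes the set of complex tensors of order $N$ and dimension $I_1\times\cdots\times I_N$. For $\mathcal{A}\in\mathbb{C}^{I_1\times\cdots\times I_N\times K_1\times\cdots\times K_N}$ and $\mathcal{B}\in\mathbb{C}^{K_1\times\cdots\times K_N\times J_1\times\cdots\times J_M}$, the Einstein product $\mathcal{A}*_N\mathcal{B}$ is defined by $(\mathcal{A}*_N\mathcal{B})_{i_1\dots i_N j_1\dots j_M}=\sum_{k_1,\dots,k_N}a_{i_1\dots i_N k_1\dots k_N}b_{k_1\dots k_N j_1\dots j_M}$; it is associative. $\mathcal{A}^H$ denotes the conjugate transpose. For $\mathcal{A}\in\mathbb{C}^{I_1\times\cdots\times I_N\times J_1\times\cdots\times J_M}$ the Moore–Penrose inverse $\mathcal{A}^{\dagger}$ is the unique $\mathcal{X}\in\mathbb{C}^{J_1\times\cdots\times J_M\times I_1\times\cdots\times I_N}$ with $\mathcal{A}*_M\mathcal{X}*_N\mathcal{A}=\mathcal{A}$, $\mathcal{X}*_N\mathcal{A}*_M\mathcal{X}=\mathcal{X}$, $(\mathcal{A}*_M\mathcal{X})^H=\mathcal{A}*_M\mathcal{X}$, $(\mathcal{X}*_N\mathcal{A})^H=\mathcal{X}*_N\mathcal{A}$. Given the factorization $\mathcal{A}=\mathcal{R}*_K\mathcal{S}*_L\mathcal{T}$, the product Moore–Penrose inverse of $\mathcal{A}$ is $\mathcal{A}_{\pi\dagger}=\mathcal{T}^{\dagger}*_L(\mathcal{R}^{\dagger}*_N\mathcal{A}*_M\mathcal{T}^{\dagger})^{\dagger}*_K\mathcal{R}^{\dagger}$.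 *)

theory Defs
  imports Complex_Main
begin

definition idx :: "nat list \<Rightarrow> nat list set" where
  "idx ds = {is. length is = length ds \<and> (\<forall>k<length ds. is ! k < ds ! k)}"

text \<open>A tensor in C^{I_1 x ... x I_N x J_1 x ... x J_M} is represented as a function of
  the two multi-indices (row part, column part) that vanishes outside idx I x idx J.\<close>
type_synonym tensor = "nat list \<Rightarrow> nat list \<Rightarrow> complex"

definition tensors :: "nat list \<Rightarrow> nat list \<Rightarrow> tensor set" where
  "tensors I J = {A. \<forall>is js. A is js \<noteq> 0 \<longrightarrow> is \<in> idx I \<and> js \<in> idx J}"

definition ein :: "nat list \<Rightarrow> tensor \<Rightarrow> tensor \<Rightarrow> tensor" where
  "ein K A B = (\<lambda>is js. \<Sum>ks\<in>idx K. A is ks * B ks js)"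

definition ctr :: "tensor \<Rightarrow> tensor" where
  "ctr A = (\<lambda>js is. cnj (A is js))"

definition is_mpinv :: "nat list \<Rightarrow> nat list \<Rightarrow> tensor \<Rightarrow> tensor \<Rightarrow> bool" where
  "is_mpinv I J A X \<longleftrightarrow> X \<in> tensors J I \<and>
     ein I (ein J A X) A = A \<and> ein J (ein I X A) X = X \<and>
     ctr (ein J A X) = ein J A X \<and> ctr (ein I X A) = ein I X A"

definition mpinv :: "nat list \<Rightarrow> nat list \<Rightarrow> tensor \<Rightarrow> tensor" where
  "mpinv I J A = (THE X. is_mpinv I J A X)"

text \<open>Product Moore-Penrose inverse of A = R *_K S *_L T (R in C^{I x H}, S in C^{H x G},
  T in C^{G x J}):  T^+ *_L (R^+ *_N A *_M T^+)^+ *_K R^+.\<close>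
definition pmpinv :: "nat list \<Rightarrow> nat list \<Rightarrow> nat list \<Rightarrow> nat list \<Rightarrow>
    tensor \<Rightarrow> tensor \<Rightarrow> tensor \<Rightarrow> tensor" where
  "pmpinv I H G J R A T =
     ein H (ein G (mpinv G J T) (mpinv H G (ein J (ein I (mpinv I H R) A) (mpinv G J T))))
       (mpinv I H R)"

end

theory Submission
  imports Defs "HOL-Library.Function_Algebras"
begin

(* Einstein products compose associatively and the conjugate transpose reverses them, so the
   Penrose equations can be manipulated exactly as for matrices.

   To reason about mpinv, which is a definite description, the Moore-Penrose inverse must exist.
   Following Penrose: the powers of the Hermitian tensor B = A^H A are linearly dependent in the
   finite-dimensional space of tensors; solving a relation for its lowest-order term and cancelling
   with A^H A P = A^H A P' ==> A P = A P' yields a polynomial Q in B with B Q B = B. Then Q A^H is a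
   {1,3}-inverse of A, conjugating one for A^H gives a {1,4}-inverse, and the two combine to A^+.

   For the theorem only the range conditions R R^+ A = A and A T^+ T = A matter. They give A^+ R R^+ = A^+ and T^+ T A^+ = A^+, so with M = R^+ A T^+ the
   equation T^+ M^+ R^+ = A^+ is equivalent to M^+ = T A^+ R. When this holds, T A^+ and A^+ R
   satisfy the Penrose equations for A T^+ and R^+ A (the missing symmetry conditions become those
   of M^+ M and M M^+), whence B = T^+ T A^+ = A^+ and C = A^+ R R^+ = A^+. *)

lemma finite_idx [simp]: "finite (idx K)"
proof (rule finite_subset)
  have "is ! k \<le> sum_list K" if "is \<in> idx K" "k < length K" for "is" k
    using that member_le_sum_list[OF nth_mem, of k K] by (auto simp: idx_def)
  then show "idx K \<subseteq> {xs. set xs \<subseteq> {..sum_list K} \<and> length xs = length K}"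
    by (auto simp: idx_def in_set_conv_nth)
qed (simp add: finite_lists_length_eq)

lemma ein_assoc: "ein K (ein L A B) C = ein L A (ein K B C)"
  unfolding ein_def
  by (intro ext) (simp add: sum_distrib_left sum_distrib_right mult.assoc sum.swap[of _ "idx K"])

lemma ctr_ctr [simp]: "ctr (ctr A) = A"
  by (simp add: ctr_def)

lemma ctr_ein: "ctr (ein K A B) = ein K (ctr B) (ctr A)"
  unfolding ctr_def ein_def by (intro ext) (simp add: mult.commute)

lemma ein_diff_right: "ein K A (B - C) = ein K A B - ein K A C"
  unfolding ein_def by (intro ext) (simp add: right_diff_distrib sum_subtractf)

lemma ein_zero_right [simp]: "ein K A 0 = 0"
  unfolding ein_def by (intro ext) simp

lemma tensorsD: "A \<in> tensors I J \<Longrightarrow> A is js \<noteq> 0 \<Longrightarrow> is \<in> idx I \<and> js \<in> idx J"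
  by (auto simp: tensors_def)

lemma ein_tensors: "A \<in> tensors I K \<Longrightarrow> B \<in> tensors K J \<Longrightarrow> ein K A B \<in> tensors I J"
  unfolding tensors_def ein_def by (fastforce elim: sum.not_neutral_contains_not_neutral)

lemma ctr_tensors: "A \<in> tensors I J \<Longrightarrow> ctr A \<in> tensors J I"
  unfolding tensors_def ctr_def by auto

definition id_tensor :: "nat list \<Rightarrow> tensor" where
  "id_tensor K = (\<lambda>is js. if is = js \<and> is \<in> idx K then 1 else 0)"

lemma id_tensor_tensors: "id_tensor K \<in> tensors K K"
  by (auto simp: id_tensor_def tensors_def)

lemma ein_id_tensor_right: "A \<in> tensors I J \<Longrightarrow> ein J A (id_tensor J) = A"
  unfolding ein_def id_tensor_def
  by (intro ext) (auto simp: if_distrib[of "(*) _"] sum.delta cong: if_cong dest: tensorsD)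

lemma ctr_id_tensor [simp]: "ctr (id_tensor K) = id_tensor K"
  by (auto simp: ctr_def id_tensor_def fun_eq_iff)

lemma ein_id_tensor_left: "A \<in> tensors I J \<Longrightarrow> ein I (id_tensor I) A = A"
  using ein_id_tensor_right[OF ctr_tensors, of A I J] arg_cong[of _ _ ctr]
  by (metis ctr_ctr ctr_ein ctr_id_tensor)

lemma gram_eq_zero_imp_eq_zero:
  assumes rows: "\<And>is ks. is \<notin> idx I \<Longrightarrow> X is ks = 0" and gram: "ein I (ctr X) X = 0"
  shows "X = 0"
proof (intro ext)
  fix "is" ks
  have "complex_of_real (\<Sum>is\<in>idx I. (cmod (X is ks))\<^sup>2) = (ein I (ctr X) X) ks ks"
    by (simp only: of_real_sum complex_norm_square ein_def ctr_def mult.commute)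
  then have "(\<Sum>is\<in>idx I. (cmod (X is ks))\<^sup>2) = 0"
    using gram by (simp only: zero_fun_def of_real_eq_0_iff)
  then have "\<forall>is\<in>idx I. X is ks = 0"
    by (simp add: sum_nonneg_eq_0_iff)
  with rows show "X is ks = 0 is ks"
    by (cases "is \<in> idx I") auto
qed

lemma ein_gram_cancel:
  assumes A: "A \<in> tensors I J" and eq: "ein J (ein I (ctr A) A) P = ein J (ein I (ctr A) A) P'"
  shows "ein J A P = ein J A P'"
proof -
  let ?D = "ein J A (P - P')"
  have rows: "?D is ks = 0" if "is \<notin> idx I" for "is" ks
  proof -
    have "A is js = 0" for js
      using that tensorsD[OF A] by blast
    then show ?thesis
      by (simp add: ein_def)
  qed
  have "ein I (ctr ?D) ?D = ein J (ctr (P - P')) (ein J (ein I (ctr A) A) (P - P'))"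
    by (simp add: ctr_ein ein_assoc)
  also have "ein J (ein I (ctr A) A) (P - P') = 0"
    using eq by (simp add: ein_diff_right)
  finally have "ein I (ctr ?D) ?D = 0"
    by (simp only: ein_zero_right)
  then have "?D = 0"
    using gram_eq_zero_imp_eq_zero rows by blast
  then show ?thesis
    by (simp add: ein_diff_right)
qed

lemma is_mpinv_unique:
  assumes X: "is_mpinv I J A X" and Y: "is_mpinv I J A Y"
  shows "X = Y"
proof -
  from X have x1: "ein I (ein J A X) A = A" and x2: "ein J (ein I X A) X = X"
    and x3: "ctr (ein J A X) = ein J A X" and x4: "ctr (ein I X A) = ein I X A"
    by (auto simp: is_mpinv_def)
  from Y have y1: "ein I (ein J A Y) A = A" and y2: "ein J (ein I Y A) Y = Y"
    and y3: "ctr (ein J A Y) = ein J A Y" and y4: "ctr (ein I Y A) = ein I Y A"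
    by (auto simp: is_mpinv_def)
  have AY: "ctr A = ein I (ctr A) (ein J A Y)"
    by (metis ctr_ein y1 y3)
  have XA: "ctr A = ein J (ein I X A) (ctr A)"
    by (metis ctr_ein ein_assoc x1 x4)
  have "X = ein I X (ein J (ctr X) (ctr A))"
    using x2 x3 by (metis ctr_ein ein_assoc)
  also have "\<dots> = ein I X (ein I (ctr (ein J A X)) (ein J A Y))"
    by (subst AY) (simp add: ctr_ein ein_assoc)
  also have "\<dots> = ein I X (ein J A Y)"
    using x3 arg_cong[OF x2, of "\<lambda>V. ein I V (ein J A Y)"] by (simp add: ein_assoc)
  also have "\<dots> = ein J (ein I X A) (ein J (ctr (ein I Y A)) Y)"
    using y2 y4 by (simp add: ein_assoc)
  also have "\<dots> = ein J (ein I (ein J (ein I X A) (ctr A)) (ctr Y)) Y"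
    by (simp add: ctr_ein ein_assoc)
  also have "\<dots> = Y"
    using y2 y4 by (simp flip: XA add: ctr_ein)
  finally show ?thesis .
qed

lemma is_mpinv_from_inner_inverses:
  assumes A: "A \<in> tensors I J"
    and Y: "Y \<in> tensors J I" "ein I (ein J A Y) A = A" "ctr (ein I Y A) = ein I Y A"
    and Z: "Z \<in> tensors J I" "ein I (ein J A Z) A = A" "ctr (ein J A Z) = ein J A Z"
  shows "is_mpinv I J A (ein J (ein I Y A) Z)"
proof -
  have "ein J A (ein I Y (ein J A W)) = ein J A W" "ein J A (ein I Z (ein J A W)) = ein J A W" for W
    using Y(2) Z(2) by (simp_all flip: ein_assoc)
  then show ?thesis
    using Y Z by (auto simp: is_mpinv_def ein_assoc intro!: ein_tensors A)
qed

lemma (in vector_space) exists_dependence_if_card_gt: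
  assumes E: "finite E" and f: "f ` S \<subseteq> span E" and S: "finite S" "card E < card S"
  shows "\<exists>c. (\<Sum>i\<in>S. c i *s f i) = 0 \<and> (\<exists>i\<in>S. c i \<noteq> 0)"
proof (cases "inj_on f S")
  case True
  have "dependent (f ` S)"
  proof (rule ccontr)
    assume "independent (f ` S)"
    then have "card (f ` S) \<le> card E"
      using independent_span_bound[OF E] f by blast
    with True S show False
      by (simp add: card_image)
  qed
  then obtain T u
    where T: "finite T" "T \<subseteq> f ` S" "(\<Sum>v\<in>T. u v *s v) = 0" "\<exists>v\<in>T. u v \<noteq> 0"
    unfolding dependent_explicit by blast
  define c where "c i = (if f i \<in> T then u (f i) else 0)" for i
  have "(\<Sum>i\<in>S. c i *s f i) = (\<Sum>v\<in>f ` S. (if v \<in> T then u v else 0) *s v)"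
    by (simp add: sum.reindex[OF True] c_def)
  also have "\<dots> = (\<Sum>v\<in>T. u v *s v)"
    using T(1,2) S(1) by (intro sum.mono_neutral_cong_right) auto
  finally show ?thesis
    using T(2-4) by (intro exI[of _ c]) (auto simp: c_def)
next
  case False
  then obtain a b where ab: "a \<in> S" "b \<in> S" "a \<noteq> b" "f a = f b"
    unfolding inj_on_def by blast
  define c where "c i = (if i = a then 1 else if i = b then -1 else 0 :: 'a)" for i
  have "(\<Sum>i\<in>S. c i *s f i) = (\<Sum>i\<in>S. (if i = a then f a else 0) - (if i = b then f b else 0))"
    using ab(3) by (intro sum.cong) (auto simp: c_def)
  also have "\<dots> = 0"
    using ab S(1) by (simp add: sum_subtractf sum.delta)
  finally show ?thesis
    using ab(1) by (intro exI[of _ c]) (auto simp: c_def)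
qed

definition tscale :: "complex \<Rightarrow> tensor \<Rightarrow> tensor" where
  "tscale c X = (\<lambda>is js. c * X is js)"

interpretation tensor: vector_space tscale
  by unfold_locales (auto simp: tscale_def fun_eq_iff algebra_simps)

lemma sum_tensor_apply: "(\<Sum>x\<in>S. f x) is js = (\<Sum>x\<in>S. (f x :: tensor) is js)"
  by (induction S rule: infinite_finite_induct) auto

lemma ein_tscale_left: "ein K (tscale c X) P = tscale c (ein K X P)"
  unfolding ein_def tscale_def by (intro ext) (simp add: sum_distrib_left mult.assoc)

lemma ein_tscale_right: "ein K P (tscale c X) = tscale c (ein K P X)"
  unfolding ein_def tscale_def by (intro ext) (simp add: sum_distrib_left algebra_simps)

lemma ein_sum_left: "ein K (\<Sum>x\<in>S. f x) P = (\<Sum>x\<in>S. ein K (f x) P)"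
  unfolding ein_def by (intro ext) (simp add: sum_tensor_apply sum_distrib_right sum.swap[of _ S])

lemma ein_sum_right: "ein K P (\<Sum>x\<in>S. f x) = (\<Sum>x\<in>S. ein K P (f x))"
  unfolding ein_def by (intro ext) (simp add: sum_tensor_apply sum_distrib_left sum.swap[of _ S])

lemma tscale_tensors: "X \<in> tensors I J \<Longrightarrow> tscale c X \<in> tensors I J"
  by (auto simp: tensors_def tscale_def)

lemma sum_tensors: "(\<And>x. x \<in> S \<Longrightarrow> f x \<in> tensors I J) \<Longrightarrow> (\<Sum>x\<in>S. f x) \<in> tensors I J"
  unfolding tensors_def sum_tensor_apply by (fastforce elim: sum.not_neutral_contains_not_neutral)

definition tunit :: "nat list \<Rightarrow> nat list \<Rightarrow> tensor" where
  "tunit as bs = (\<lambda>is js. if is = as \<and> js = bs then 1 else 0)"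

lemma tensors_subset_span_tunits:
  "tensors I J \<subseteq> tensor.span (case_prod tunit ` (idx I \<times> idx J))"
proof
  fix X assume X: "X \<in> tensors I J"
  have "X = (\<Sum>(as, bs)\<in>idx I \<times> idx J. tscale (X as bs) (tunit as bs))"
  proof (intro ext)
    fix "is" js
    have "(\<Sum>(as, bs)\<in>idx I \<times> idx J. tscale (X as bs) (tunit as bs)) is js
        = (\<Sum>p\<in>idx I \<times> idx J. if p = (is, js) then X is js else 0)"
      unfolding sum_tensor_apply by (intro sum.cong) (auto simp: tscale_def tunit_def split: if_splits)
    also have "\<dots> = X is js"
      using tensorsD[OF X, of "is" js] by auto
    finally show "X is js = (\<Sum>(as, bs)\<in>idx I \<times> idx J. tscale (X as bs) (tunit as bs)) is js"
      by simp
  qed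
  also have "\<dots> \<in> tensor.span (case_prod tunit ` (idx I \<times> idx J))"
    by (intro tensor.span_sum) (auto intro: tensor.span_scale tensor.span_base)
  finally show "X \<in> tensor.span (case_prod tunit ` (idx I \<times> idx J))" .
qed

primrec tpow :: "nat list \<Rightarrow> tensor \<Rightarrow> nat \<Rightarrow> tensor" where
  "tpow J B 0 = id_tensor J"
| "tpow J B (Suc n) = ein J B (tpow J B n)"

lemma tpow_tensors: "B \<in> tensors J J \<Longrightarrow> tpow J B n \<in> tensors J J"
  by (induction n) (auto intro: ein_tensors id_tensor_tensors)

lemma tpow_add: "B \<in> tensors J J \<Longrightarrow> tpow J B (m + n) = ein J (tpow J B m) (tpow J B n)"
  by (induction m) (auto simp: ein_id_tensor_left[OF tpow_tensors] ein_assoc)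

lemma tpow_commute: "B \<in> tensors J J \<Longrightarrow> ein J B (tpow J B n) = ein J (tpow J B n) B"
  using tpow_add[of B J n 1] by (simp add: ein_id_tensor_right)

lemma tpow_linear_dependence:
  assumes "B \<in> tensors J J"
  shows "\<exists>m c. (\<Sum>i\<in>{1..m}. tscale (c i) (tpow J B i)) = 0 \<and> (\<exists>i\<in>{1..m}. c i \<noteq> 0)"
proof -
  define E where "E = case_prod tunit ` (idx J \<times> idx J)"
  have span: "tpow J B ` {1..card E + 1} \<subseteq> tensor.span E"
    unfolding E_def using tensors_subset_span_tunits tpow_tensors[OF assms] by blast
  have "finite E" "card E < card {1..card E + 1}"
    by (simp_all add: E_def)
  from tensor.exists_dependence_if_card_gt[OF \<open>finite E\<close> span finite_atLeastAtMost this(2)]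
  show ?thesis
    by blast
qed

lemma tpow_lowest_term:
  assumes B: "B \<in> tensors J J"
  obtains k m c where "0 < k" "c k \<noteq> 0"
    "(\<Sum>i\<in>{Suc k..m}. tscale (c i) (tpow J B i)) = - tscale (c k) (tpow J B k)"
proof -
  obtain m c where rel: "(\<Sum>i\<in>{1..m}. tscale (c i) (tpow J B i)) = 0"
    and nz: "\<exists>i\<in>{1..m}. c i \<noteq> 0"
    using tpow_linear_dependence[OF B] by blast
  define k where "k = (LEAST i. i \<in> {1..m} \<and> c i \<noteq> 0)"
  have k: "k \<in> {1..m}" "c k \<noteq> 0"
    using LeastI_ex[OF nz[unfolded Bex_def]] unfolding k_def by auto
  have below: "c i = 0" if "i \<in> {1..m}" "i < k" for i
    using not_less_Least[of i "\<lambda>i. i \<in> {1..m} \<and> c i \<noteq> 0"] that unfolding k_def by blast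
  have "(\<Sum>i\<in>{1..m}. tscale (c i) (tpow J B i)) = (\<Sum>i\<in>{k..m}. tscale (c i) (tpow J B i))"
    using k below by (intro sum.mono_neutral_right) (auto simp: tscale_def fun_eq_iff)
  also have "\<dots> = tscale (c k) (tpow J B k) + (\<Sum>i\<in>{Suc k..m}. tscale (c i) (tpow J B i))"
    using k by (subst sum.atLeast_Suc_atMost) auto
  finally have "(\<Sum>i\<in>{Suc k..m}. tscale (c i) (tpow J B i)) = - tscale (c k) (tpow J B k)"
    using rel by (simp add: eq_neg_iff_add_eq_0 add.commute)
  then show thesis
    using k by (intro that) auto
qed

text \<open>Dividing the relation by its lowest coefficient writes B^k as B^(k+1) Q with Q a polynomial
  in B.\<close>
lemma tpow_eq_tpow_Suc_ein:
  assumes B: "B \<in> tensors J J"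
  obtains k Q where "0 < k" "Q \<in> tensors J J" "ein J B Q = ein J Q B"
    "tpow J B k = ein J (tpow J B (Suc k)) Q"
proof -
  obtain k m c where k: "0 < k" "c k \<noteq> 0"
    and low: "(\<Sum>i\<in>{Suc k..m}. tscale (c i) (tpow J B i)) = - tscale (c k) (tpow J B k)"
    using tpow_lowest_term[OF B] .
  define Q where "Q = (\<Sum>i\<in>{Suc k..m}. tscale (- c i / c k) (tpow J B (i - Suc k)))"
  have "ein J (tpow J B (Suc k)) Q = (\<Sum>i\<in>{Suc k..m}. tscale (- 1 / c k) (tscale (c i) (tpow J B i)))"
    unfolding Q_def ein_sum_right ein_tscale_right
    by (intro sum.cong) (auto simp: tpow_add[OF B, symmetric] tscale_def simp del: tpow.simps)
  also have "\<dots> = tscale (- 1 / c k) (\<Sum>i\<in>{Suc k..m}. tscale (c i) (tpow J B i))"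
    by (simp add: tensor.scale_sum_right)
  also have "\<dots> = tpow J B k"
    unfolding low using k(2) by (simp add: tscale_def fun_eq_iff)
  finally have "tpow J B k = ein J (tpow J B (Suc k)) Q" ..
  moreover have "ein J B Q = ein J Q B"
    unfolding Q_def ein_sum_left ein_sum_right ein_tscale_left ein_tscale_right tpow_commute[OF B] ..
  moreover have "Q \<in> tensors J J"
    unfolding Q_def by (intro sum_tensors tscale_tensors tpow_tensors B)
  ultimately show thesis
    using k(1) that by blast
qed

lemma hermitian_tpow_cancel:
  assumes B: "B \<in> tensors J J" "ctr B = B"
    and eq: "tpow J B (Suc (Suc n)) = ein J (tpow J B (Suc (Suc (Suc n)))) Q"
  shows "tpow J B (Suc n) = ein J (tpow J B (Suc (Suc n))) Q"
proof -
  have "ein J (ein J (ctr B) B) (tpow J B n) = tpow J B (Suc (Suc n))"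
    by (simp add: B(2) ein_assoc)
  also note eq
  also have "ein J (tpow J B (Suc (Suc (Suc n)))) Q
      = ein J (ein J (ctr B) B) (ein J (tpow J B (Suc n)) Q)"
    by (simp add: B(2) ein_assoc)
  finally have "ein J B (tpow J B n) = ein J B (ein J (tpow J B (Suc n)) Q)"
    by (rule ein_gram_cancel[OF B(1)])
  then show ?thesis
    by (metis ein_assoc tpow.simps(2))
qed

lemma hermitian_inner_inverse:
  assumes B: "B \<in> tensors J J" "ctr B = B"
  obtains Q where "Q \<in> tensors J J" "ein J (ein J B Q) B = B"
proof -
  obtain k Q where "0 < k" and Q: "Q \<in> tensors J J" "ein J B Q = ein J Q B"
    and k: "tpow J B k = ein J (tpow J B (Suc k)) Q"
    using tpow_eq_tpow_Suc_ein[OF B(1)] .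
  have "tpow J B (Suc d) = ein J (tpow J B (Suc (Suc d))) Q \<Longrightarrow>
      tpow J B (Suc 0) = ein J (tpow J B (Suc (Suc 0))) Q" for d
  proof (induction d)
    case (Suc d)
    then show ?case
      using hermitian_tpow_cancel[OF B] by blast
  qed
  with k \<open>0 < k\<close> have "tpow J B (Suc 0) = ein J (tpow J B (Suc (Suc 0))) Q"
    by (cases k) auto
  then have "ein J B (ein J Q B) = B"
    using Q(2) by (simp add: ein_id_tensor_right[OF B(1)] ein_assoc)
  with Q(1) that show thesis
    by (simp add: ein_assoc)
qed

lemma exists_13_inverse:
  assumes A: "A \<in> tensors I J"
  obtains Z where "Z \<in> tensors J I" "ein I (ein J A Z) A = A" "ctr (ein J A Z) = ein J A Z"
proof -
  define B where "B = ein I (ctr A) A"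
  have B: "B \<in> tensors J J" "ctr B = B"
    unfolding B_def by (auto intro: ein_tensors ctr_tensors A simp: ctr_ein)
  obtain Q where Q: "Q \<in> tensors J J" "ein J (ein J B Q) B = B"
    using hermitian_inner_inverse[OF B] by blast
  have "ein J (ein I (ctr A) A) (ein J Q B) = ein J (ein I (ctr A) A) (id_tensor J)"
    using Q(2) by (simp add: B_def[symmetric] ein_id_tensor_right[OF B(1)] ein_assoc)
  then have AQB: "ein J A (ein J Q B) = A"
    using ein_gram_cancel[OF A] ein_id_tensor_right[OF A] by metis
  then have cA: "ctr A = ein J B (ein J (ctr Q) (ctr A))"
    by (metis B(2) ctr_ein ein_assoc)
  define Z where "Z = ein J Q (ctr A)"
  have "ein I (ein J A Z) A = A"
    unfolding Z_def using AQB by (simp add: ein_assoc B_def)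
  moreover have "ein J A Z = ein J (ein J A (ein J Q B)) (ein J (ctr Q) (ctr A))"
    unfolding Z_def by (subst cA) (simp only: ein_assoc)
  then have "ctr (ein J A Z) = ein J A Z"
    unfolding Z_def by (simp add: AQB ctr_ein ein_assoc)
  moreover have "Z \<in> tensors J I"
    unfolding Z_def by (intro ein_tensors ctr_tensors A Q(1))
  ultimately show thesis
    using that by blast
qed

lemma is_mpinv_exists:
  assumes A: "A \<in> tensors I J"
  shows "\<exists>X. is_mpinv I J A X"
proof -
  obtain Z where Z: "Z \<in> tensors J I" "ein I (ein J A Z) A = A" "ctr (ein J A Z) = ein J A Z"
    using exists_13_inverse[OF A] by blast
  obtain Z' where Z': "Z' \<in> tensors I J" "ein J (ein I (ctr A) Z') (ctr A) = ctr A"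
      "ctr (ein I (ctr A) Z') = ein I (ctr A) Z'"
    using exists_13_inverse[OF ctr_tensors[OF A]] by blast
  have "ctr Z' \<in> tensors J I"
    using Z'(1) by (rule ctr_tensors)
  moreover have "ein I (ein J A (ctr Z')) A = A"
    using arg_cong[OF Z'(2), of ctr] by (simp add: ctr_ein ein_assoc)
  moreover have "ctr (ein I (ctr Z') A) = ein I (ctr Z') A"
    using Z'(3) by (simp add: ctr_ein)
  ultimately show ?thesis
    using is_mpinv_from_inner_inverses[OF A _ _ _ Z] by blast
qed

lemma is_mpinv_mpinv: "A \<in> tensors I J \<Longrightarrow> is_mpinv I J A (mpinv I J A)"
  unfolding mpinv_def using is_mpinv_exists is_mpinv_unique by (metis theI)

lemma mpinv_eq: "is_mpinv I J A X \<Longrightarrow> mpinv I J A = X"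
  unfolding mpinv_def using is_mpinv_unique by blast

lemma ein_absorb_front: "ein K P (ein L Q X) = X \<Longrightarrow> ein K P (ein L Q (ein N X Y)) = ein N X Y"
  by (metis ein_assoc)

lemma ein_absorb_back: "ein K X (ein L P Q) = X \<Longrightarrow> ein K X (ein L P (ein N Q Y)) = ein N X Y"
  by (metis ein_assoc)

lemma is_mpinv_cancel:
  assumes "is_mpinv I J A X"
  shows "ein J A (ein I X (ein J A Y)) = ein J A Y" "ein I X (ein J A (ein I X Y)) = ein I X Y"
  using assms unfolding is_mpinv_def by (simp_all flip: ein_assoc)

lemma is_mpinv_absorb_left:
  assumes X: "is_mpinv I J A X" and AP: "ein J A P = A" and P: "ctr P = P"
  shows "ein J P X = X"
proof -
  from X have X_eq: "X = ein J (ein I (ctr A) (ctr X)) X"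
    unfolding is_mpinv_def by (simp add: ctr_ein)
  have "ein J P (ctr A) = ctr A"
    using arg_cong[OF AP, of ctr] P by (simp add: ctr_ein)
  then have "ein J P (ein J (ein I (ctr A) (ctr X)) X) = ein J (ein I (ctr A) (ctr X)) X"
    by (simp flip: ein_assoc)
  with X_eq show ?thesis
    by simp
qed

lemma is_mpinv_absorb_right:
  assumes X: "is_mpinv I J A X" and PA: "ein I P A = A" and P: "ctr P = P"
  shows "ein I X P = X"
proof -
  from X have X_eq: "X = ein I X (ein J (ctr X) (ctr A))"
    unfolding is_mpinv_def by (simp add: ctr_ein ein_assoc)
  have "ein I (ctr A) P = ctr A"
    using arg_cong[OF PA, of ctr] P by (simp add: ctr_ein)
  then have "ein I (ein I X (ein J (ctr X) (ctr A))) P = ein I X (ein J (ctr X) (ctr A))"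
    by (simp add: ein_assoc)
  with X_eq show ?thesis
    by simp
qed

lemma is_mpinv_ein_right:
  assumes X: "is_mpinv I J A X" and V: "V \<in> tensors G J"
    and WVX: "ein G W (ein J V X) = X"
    and herm: "ctr (ein I (ein J V X) (ein J A W)) = ein I (ein J V X) (ein J A W)"
  shows "is_mpinv I G (ein J A W) (ein J V X)"
proof -
  from X have Xt: "X \<in> tensors J I" and XAX: "ein I X (ein J A X) = X"
    and AX: "ctr (ein J A X) = ein J A X"
    unfolding is_mpinv_def by (simp_all add: ein_assoc)
  show ?thesis
    unfolding is_mpinv_def
  proof (intro conjI)
    show "ein J V X \<in> tensors G I"
      by (rule ein_tensors[OF V Xt])
    show "ein I (ein G (ein J A W) (ein J V X)) (ein J A W) = ein J A W"
      by (simp add: ein_assoc ein_absorb_front[OF WVX] is_mpinv_cancel[OF X])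
    show "ein G (ein I (ein J V X) (ein J A W)) (ein J V X) = ein J V X"
      by (simp add: ein_assoc WVX XAX)
    show "ctr (ein G (ein J A W) (ein J V X)) = ein G (ein J A W) (ein J V X)"
      by (simp add: ein_assoc WVX AX)
  qed (rule herm)
qed

lemma is_mpinv_ein_left:
  assumes X: "is_mpinv I J A X" and V: "V \<in> tensors I H"
    and XVW: "ein I X (ein H V W) = X"
    and herm: "ctr (ein J (ein I W A) (ein I X V)) = ein J (ein I W A) (ein I X V)"
  shows "is_mpinv H J (ein I W A) (ein I X V)"
proof -
  from X have Xt: "X \<in> tensors J I" and AXA: "ein J A (ein I X A) = A"
    and XA: "ctr (ein I X A) = ein I X A"
    unfolding is_mpinv_def by (simp_all add: ein_assoc)
  show ?thesis
    unfolding is_mpinv_def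
  proof (intro conjI)
    show "ein I X V \<in> tensors J H"
      by (rule ein_tensors[OF Xt V])
    show "ein H (ein J (ein I W A) (ein I X V)) (ein I W A) = ein I W A"
      by (simp add: ein_assoc ein_absorb_back[OF XVW] AXA)
    show "ein J (ein H (ein I X V) (ein I W A)) (ein I X V) = ein I X V"
      by (simp add: ein_assoc ein_absorb_back[OF XVW] is_mpinv_cancel[OF X])
    show "ctr (ein H (ein I X V) (ein I W A)) = ein H (ein I X V) (ein I W A)"
      by (simp add: ein_assoc ein_absorb_back[OF XVW] XA)
  qed (rule herm)
qed

lemma mpinv_tensors: "A \<in> tensors I J \<Longrightarrow> mpinv I J A \<in> tensors J I"
  using is_mpinv_mpinv unfolding is_mpinv_def by blast

lemma mpinv_range_left:
  "R \<in> tensors I H \<Longrightarrow> ein H R (ein I (mpinv I H R) (ein H R X)) = ein H R X"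
  using is_mpinv_mpinv[of R I H] unfolding is_mpinv_def by (simp flip: ein_assoc)

lemma mpinv_range_right:
  "T \<in> tensors G J \<Longrightarrow> ein J (ein G X T) (ein G (mpinv G J T) T) = ein G X T"
  using is_mpinv_mpinv[of T G J] unfolding is_mpinv_def by (simp add: ein_assoc)

locale outer_factors =
  fixes I H G J :: "nat list" and R T A :: tensor
  assumes R: "R \<in> tensors I H" and T: "T \<in> tensors G J" and A: "A \<in> tensors I J"
    and range_R: "ein H R (ein I (mpinv I H R) A) = A"
    and range_T: "ein J A (ein G (mpinv G J T) T) = A"
begin

abbreviation "Rp \<equiv> mpinv I H R"
abbreviation "Tp \<equiv> mpinv G J T"
abbreviation "Ap \<equiv> mpinv I J A"
abbreviation "M \<equiv> ein J (ein I Rp A) Tp"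
abbreviation "Mp \<equiv> mpinv H G M"

lemma is_mpinv_M: "is_mpinv H G M Mp"
  by (intro is_mpinv_mpinv ein_tensors mpinv_tensors R T A)

lemma Ap_R_Rp: "ein I Ap (ein H R Rp) = Ap"
  using is_mpinv_mpinv[OF R] range_R
  by (intro is_mpinv_absorb_right[OF is_mpinv_mpinv[OF A]]) (simp_all add: is_mpinv_def ein_assoc)

lemma Tp_T_Ap: "ein G Tp (ein J T Ap) = Ap"
proof -
  have "ein J (ein G Tp T) Ap = Ap"
    using is_mpinv_mpinv[OF T] range_T
    by (intro is_mpinv_absorb_left[OF is_mpinv_mpinv[OF A]]) (simp_all add: is_mpinv_def)
  then show ?thesis
    by (simp add: ein_assoc)
qed

lemma T_Tp_Mp: "ein G (ein J T Tp) Mp = Mp"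
  using is_mpinv_cancel[OF is_mpinv_mpinv[OF T]] is_mpinv_mpinv[OF T]
  by (intro is_mpinv_absorb_left[OF is_mpinv_M]) (simp_all add: is_mpinv_def ein_assoc)

lemma Mp_Rp_R: "ein H Mp (ein I Rp R) = Mp"
  using is_mpinv_cancel[OF is_mpinv_mpinv[OF R]] is_mpinv_mpinv[OF R]
  by (intro is_mpinv_absorb_right[OF is_mpinv_M]) (simp_all add: is_mpinv_def ein_assoc)

lemma pmpinv_eq_mpinv_iff: "pmpinv I H G J R A T = Ap \<longleftrightarrow> Mp = ein I (ein J T Ap) R"
proof
  assume "pmpinv I H G J R A T = Ap"
  then have "ein I (ein J T Ap) R = ein I (ein J T (pmpinv I H G J R A T)) R"
    by simp
  also have "\<dots> = ein H (ein G (ein J T Tp) Mp) (ein I Rp R)"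
    unfolding pmpinv_def by (simp only: ein_assoc)
  also have "\<dots> = Mp"
    by (simp only: T_Tp_Mp Mp_Rp_R)
  finally show "Mp = ein I (ein J T Ap) R" ..
next
  assume "Mp = ein I (ein J T Ap) R"
  then show "pmpinv I H G J R A T = Ap"
    unfolding pmpinv_def by (simp only: ein_assoc Ap_R_Rp Tp_T_Ap)
qed

lemma mpinv_A_Tp_eq:
  assumes "Mp = ein I (ein J T Ap) R"
  shows "mpinv I G (ein J A Tp) = ein J T Ap"
proof (rule mpinv_eq, rule is_mpinv_ein_right[OF is_mpinv_mpinv[OF A] T Tp_T_Ap])
  have "ein I (ein J T Ap) (ein J A Tp) = ein H Mp M"
    unfolding assms by (simp add: ein_assoc ein_absorb_back[OF Ap_R_Rp])
  with is_mpinv_M show "ctr (ein I (ein J T Ap) (ein J A Tp)) = ein I (ein J T Ap) (ein J A Tp)"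
    unfolding is_mpinv_def by simp
qed

lemma mpinv_Rp_A_eq:
  assumes "Mp = ein I (ein J T Ap) R"
  shows "mpinv H J (ein I Rp A) = ein I Ap R"
proof (rule mpinv_eq, rule is_mpinv_ein_left[OF is_mpinv_mpinv[OF A] R Ap_R_Rp])
  have "ein J (ein I Rp A) (ein I Ap R) = ein G M Mp"
    unfolding assms by (simp add: ein_assoc ein_absorb_front[OF Tp_T_Ap])
  with is_mpinv_M show "ctr (ein J (ein I Rp A) (ein I Ap R)) = ein J (ein I Rp A) (ein I Ap R)"
    unfolding is_mpinv_def by simp
qed

end

theorem theorem3p9:
  fixes I H G J :: "nat list" and R S T :: tensor
  assumes "R \<in> tensors I H" and "S \<in> tensors H G" and "T \<in> tensors G J"
  defines "A \<equiv> ein G (ein H R S) T"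
  defines "B \<equiv> ein G (mpinv G J T) (mpinv I G (ein J A (mpinv G J T)))"
  defines "C \<equiv> ein H (mpinv H J (ein I (mpinv I H R) A)) (mpinv I H R)"
  shows "(pmpinv I H G J R A T = mpinv I J A \<longleftrightarrow>
           mpinv H G (ein J (ein I (mpinv I H R) A) (mpinv G J T))
             = ein I (ein J T (mpinv I J A)) R)
       \<and> (pmpinv I H G J R A T = mpinv I J A \<longrightarrow>
           mpinv I J A = B \<and> B = C)"
proof -
  interpret outer_factors I H G J R T A
  proof
    show "A \<in> tensors I J"
      unfolding A_def by (intro ein_tensors assms)
    show "ein H R (ein I (mpinv I H R) A) = A"
      unfolding A_def using mpinv_range_left[OF assms(1)] by (simp add: ein_assoc)
    show "ein J A (ein G (mpinv G J T) T) = A"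
      unfolding A_def using mpinv_range_right[OF assms(3)] by (simp add: ein_assoc)
  qed (fact assms)+
  have "B = Ap \<and> C = Ap" if "Mp = ein I (ein J T Ap) R"
    unfolding B_def C_def mpinv_A_Tp_eq[OF that] mpinv_Rp_A_eq[OF that]
    using Ap_R_Rp Tp_T_Ap by (simp add: ein_assoc)
  with pmpinv_eq_mpinv_iff show ?thesis
    by auto
qed

end
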